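(* Let $n\ge 2$ be an integer and $\Pi_2,\Pi_3>0$. Let $\mathbb{D}^2$ be the $n\times n$ circulant matrix with first row $(-2,1,0,\ldots,0,1)$, and let $A=\begin{bmatrix}0&I\\ \mathbb{D}^2&0\end{bmatrix}\in\mathbb{R}^{2n\times 2n}$, $B=\begin{bmatrix}0\\ I\end{bmatrix}\in\mathbb{R}^{2n\times n}$. Consider the linear quadratic regulator problem: minimize $$\int_0^\infty \boldsymbol{\Phi}(\tau)^T\begin{bmatrix}I&0\\0&\Pi_2 I\end{bmatrix}\boldsymbol{\Phi}(\tau)+\frac{1}{\Pi_3^2}\boldsymbol{\omega}(\tau)^T\boldsymbol{\omega}(\tau)\,d\tau$$ subject to $\frac{d}{d\tau}\boldsymbol{\Phi}(\tau)=A\boldsymbol{\Phi}(\tau)+B\boldsymbol{\omega}(\tau)$, with state $\boldsymbol{\Phi}(\tau)\in\mathbb{R}^{2n}$ and control $\boldsymbol{\omega}(\tau)\in\mathbb{R}^n$. Then the optimal feedback gain $K$ (so that the optimal control is $\boldsymbol{\omega}=-K\boldsymbol{\Phi}$) is $K=\begin{bmatrix}K_1&K_2\end{bmatrix}$ where $K_1,K_2$ are the circulant matrices $$K_1=F^{-1}\mathrm{diag}\big(\hat{K}_0(\kappa)\big)F,\qquad K_2=F^{-1}\mathrm{diag}\Big(\sqrt{2\hat{K}_0(\kappa)+\Pi_2\Pi_3^2}\Big)F,$$ with, for $\kappa\in\{0,\ldots,n-1\}$, $$\hat{K}_0(\kappa)=\hat{D}_{\kappa\kappa}+\sqrt{\hat{D}_{\kappa\kappa}^2+\Pi_3^2},\qquad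 \hat{D}_{\kappa\kappa}=-4\sin^2\!\left(\frac{\pi\kappa}{n}\right).$$ Equivalently, in the spatial frequency domain, $\hat{K}(\kappa)=\begin{bmatrix}\hat{K}_0(\kappa)&\sqrt{2\hat{K}_0(\kappa)+\Pi_2\Pi_3^2}\end{bmatrix}$.
   Context: $F$ denotes the $n\times n$ unitary discrete Fourier transform matrix, $F_{kj}=n^{-1/2}e^{-2\pi i kj/n}$ for $k,j\in\{0,\ldots,n-1\}$; $\mathrm{diag}(f(\kappa))$ is the $n\times n$ diagonal matrix whose $\kappa$-th diagonal entry is $f(\kappa)$, $\kappa=0,\ldots,n-1$. The optimal feedback gain of the LQR problem with cost $\int \boldsymbol{\Phi}^TQ\boldsymbol{\Phi}+\boldsymbol{\omega}^TR\boldsymbol{\omega}$ is $K=R^{-1}B^TP$, where $P$ is the symmetric positive definite (stabilizing) solution of the algebraic Riccati equation $PA+A^TP-PBR^{-1}B^TP+Q=0$. The nondimensional variables arise from the spatial discretization of the wave equation $\partial_t^2p=c^2\partial_x^2p+u$ on a circle, with $\Pi_2,\Pi_3$ weights on kinetic energy and (inverse) control effort. *)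

theory Defs
  imports "Jordan_Normal_Form.Matrix" "Jordan_Normal_Form.Char_Poly"
begin

definition mat_inv :: "'a :: field mat \<Rightarrow> 'a mat" where
  "mat_inv M = (THE M'. M' \<in> carrier_mat (dim_row M) (dim_row M) \<and>
                        M * M' = 1\<^sub>m (dim_row M) \<and> M' * M = 1\<^sub>m (dim_row M))"

(* horizontal concatenation [X Y] *)
definition hcat :: "'a :: zero mat \<Rightarrow> 'a mat \<Rightarrow> 'a mat" where
  "hcat X Y = four_block_mat X Y (0\<^sub>m 0 (dim_col X)) (0\<^sub>m 0 (dim_col Y))"

(* D^2 = -2 I + S + S^T, S the cyclic shift: circulant with first row (-2,1,0,...,0,1) *)
definition D2 :: "nat \<Rightarrow> real mat" where
  "D2 n = mat n n (\<lambda>(i,j). (if i = j then -2 else 0)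
                         + (if j = (i + 1) mod n then 1 else 0)
                         + (if i = (j + 1) mod n then 1 else 0))"

definition Amat :: "nat \<Rightarrow> real mat" where
  "Amat n = four_block_mat (0\<^sub>m n n) (1\<^sub>m n) (D2 n) (0\<^sub>m n n)"

definition Bmat :: "nat \<Rightarrow> real mat" where
  "Bmat n = (0\<^sub>m n n) @\<^sub>r (1\<^sub>m n)"

definition Qmat :: "nat \<Rightarrow> real \<Rightarrow> real mat" where
  "Qmat n \<Pi>2 = four_block_mat (1\<^sub>m n) (0\<^sub>m n n) (0\<^sub>m n n) (\<Pi>2 \<cdot>\<^sub>m 1\<^sub>m n)"

definition Rmat :: "nat \<Rightarrow> real \<Rightarrow> real mat" where
  "Rmat n \<Pi>3 = (1 / \<Pi>3\<^sup>2) \<cdot>\<^sub>m 1\<^sub>m n"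

definition pos_def_mat :: "real mat \<Rightarrow> bool" where
  "pos_def_mat P \<longleftrightarrow> (\<forall>x \<in> carrier_vec (dim_row P). x \<noteq> 0\<^sub>v (dim_row P) \<longrightarrow> x \<bullet> (P *\<^sub>v x) > 0)"

definition hurwitz :: "real mat \<Rightarrow> bool" where
  "hurwitz M \<longleftrightarrow> (\<forall>z. eigenvalue (map_mat complex_of_real M) z \<longrightarrow> Re z < 0)"

definition care_solution :: "real mat \<Rightarrow> real mat \<Rightarrow> real mat \<Rightarrow> real mat \<Rightarrow> real mat \<Rightarrow> bool" where
  "care_solution A B Q R P \<longleftrightarrow>
     P \<in> carrier_mat (dim_row A) (dim_row A) \<and> P\<^sup>T = P \<and> pos_def_mat P \<and>
     P * A + A\<^sup>T * P - P * B * mat_inv R * B\<^sup>T * P + Q = 0\<^sub>m (dim_row A) (dim_row A) \<and>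
     hurwitz (A - B * mat_inv R * B\<^sup>T * P)"

definition lqr_gain :: "real mat \<Rightarrow> real mat \<Rightarrow> real mat \<Rightarrow> real mat" where
  "lqr_gain B R P = mat_inv R * B\<^sup>T * P"

definition DFT :: "nat \<Rightarrow> complex mat" where
  "DFT n = mat n n (\<lambda>(k,j). complex_of_real (1 / sqrt (real n)) *
                            cis (- 2 * pi * real k * real j / real n))"

definition diag_c :: "nat \<Rightarrow> (nat \<Rightarrow> complex) \<Rightarrow> complex mat" where
  "diag_c n f = mat n n (\<lambda>(i,j). if i = j then f i else 0)"

definition Dhat :: "nat \<Rightarrow> nat \<Rightarrow> real" where
  "Dhat n \<kappa> = - 4 * (sin (pi * real \<kappa> / real n))\<^sup>2"

definition K0hat :: "nat \<Rightarrow> real \<Rightarrow> nat \<Rightarrow> real" where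
  "K0hat n \<Pi>3 \<kappa> = Dhat n \<kappa> + sqrt ((Dhat n \<kappa>)\<^sup>2 + \<Pi>3\<^sup>2)"

definition K1mat :: "nat \<Rightarrow> real \<Rightarrow> complex mat" where
  "K1mat n \<Pi>3 = mat_inv (DFT n) * diag_c n (\<lambda>\<kappa>. complex_of_real (K0hat n \<Pi>3 \<kappa>)) * DFT n"

definition K2mat :: "nat \<Rightarrow> real \<Rightarrow> real \<Rightarrow> complex mat" where
  "K2mat n \<Pi>2 \<Pi>3 = mat_inv (DFT n) *
      diag_c n (\<lambda>\<kappa>. complex_of_real (sqrt (2 * K0hat n \<Pi>3 \<kappa> + \<Pi>2 * \<Pi>3\<^sup>2))) * DFT n"

end

theory Submission
  imports Defs "Jordan_Normal_Form.Schur_Decomposition"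
begin

(* The unitary DFT diagonalises every circulant matrix, in particular D2 n, whose
   eigenvalues are Dhat n k. In Fourier coordinates the Riccati equation therefore splits into n
   decoupled 2x2 Riccati equations, one per frequency, whose stabilising solutions are explicit.
   Assembled, they give a symmetric positive definite P; at frequency k the closed loop A - B R^-1 B^T P
   has characteristic polynomial z^2 + K2 z + (K0 - Dhat) with positive coefficients, so it is Hurwitz.
   A stabilising solution of a CARE is unique: the difference X of two of them solves the Sylvester
   equation X M + N X = 0 with M and N Hurwitz, and Schur triangularisation of M shows X = 0.
   The optimal gain R^-1 B^T P is thus the pair of Fourier multipliers K1, K2. *)

section \<open>Stabilising solutions of the CARE are unique\<close>

lemma riccati_quadratic_assoc:
  assumes "P \<in> carrier_mat m m" "B \<in> carrier_mat m k" "Ri \<in> carrier_mat k k"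
  shows "P * B * Ri * transpose_mat B * P = P * (B * Ri * transpose_mat B) * P"
proof -
  have "P * B * Ri = P * (B * Ri)"
    using assms by (rule assoc_mult_mat)
  moreover have "P * (B * Ri) * transpose_mat B = P * (B * Ri * transpose_mat B)"
    using assms by (intro assoc_mult_mat[of _ m m _ k _ m]) auto
  ultimately show ?thesis by simp
qed

lemma riccati_difference:
  fixes A G P1 P2 Q :: "'a :: comm_ring_1 mat"
  assumes c: "A \<in> carrier_mat m m" "G \<in> carrier_mat m m" "P1 \<in> carrier_mat m m" "P2 \<in> carrier_mat m m"
      "Q \<in> carrier_mat m m"
    and G_sym: "transpose_mat G = G" and P2_sym: "transpose_mat P2 = P2"
    and ARE1: "P1 * A + transpose_mat A * P1 - P1 * G * P1 + Q = 0\<^sub>m m m"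
    and ARE2: "P2 * A + transpose_mat A * P2 - P2 * G * P2 + Q = 0\<^sub>m m m"
  shows "(P1 - P2) * (A - G * P1) + transpose_mat (A - G * P2) * (P1 - P2) = 0\<^sub>m m m"
proof -
  have transpose: "transpose_mat (A - G * P2) = transpose_mat A - P2 * G"
    using c by (simp add: transpose_minus[of _ m m] transpose_mult[of _ m m] G_sym P2_sym)
  have left: "(P1 - P2) * (A - G * P1) = P1 * A - P2 * A - (P1 * (G * P1) - P2 * (G * P1))"
    using c by (simp add: minus_mult_distrib_mat[of _ m m _ _ m] mult_minus_distrib_mat[of _ m m _ m]
        minus_carrier_mat[of _ m m] mult_carrier_mat[of _ m m] assoc_mult_mat[of _ m m _ m _ m])
  have right: "(transpose_mat A - P2 * G) * (P1 - P2) =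
      transpose_mat A * P1 - P2 * (G * P1) - (transpose_mat A * P2 - P2 * (G * P2))"
    using c by (simp add: minus_mult_distrib_mat[of _ m m _ _ m] mult_minus_distrib_mat[of _ m m _ m]
        minus_carrier_mat[of _ m m] mult_carrier_mat[of _ m m] assoc_mult_mat[of _ m m _ m _ m])
  have ARE1': "P1 * A + transpose_mat A * P1 - P1 * (G * P1) + Q = 0\<^sub>m m m"
    and ARE2': "P2 * A + transpose_mat A * P2 - P2 * (G * P2) + Q = 0\<^sub>m m m"
    using ARE1 ARE2 c by (simp_all add: assoc_mult_mat[of _ m m _ m _ m])
  have "P1 * A - P2 * A - (P1 * (G * P1) - P2 * (G * P1))
      + (transpose_mat A * P1 - P2 * (G * P1) - (transpose_mat A * P2 - P2 * (G * P2))) =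
      (P1 * A + transpose_mat A * P1 - P1 * (G * P1) + Q) - (P2 * A + transpose_mat A * P2 - P2 * (G * P2) + Q)"
    by (rule eq_matI) (use c in \<open>simp_all del: index_mult_mat(1) add: algebra_simps\<close>)
  then show ?thesis
    unfolding transpose left right ARE1' ARE2' by simp
qed

lemma index_mult_upper_triangular:
  fixes Y T :: "'a :: comm_ring_1 mat"
  assumes "Y \<in> carrier_mat m m" "T \<in> carrier_mat m m" "upper_triangular T" "i < m" "j < m"
    and earlier_cols_zero: "\<And>l. l < j \<Longrightarrow> Y $$ (i,l) = 0"
  shows "(Y * T) $$ (i,j) = Y $$ (i,j) * T $$ (j,j)"
proof -
  have "(Y * T) $$ (i,j) = (\<Sum>l = 0..<m. Y $$ (i,l) * T $$ (l,j))"
    using assms by (simp add: scalar_prod_def)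
  also have "\<dots> = (\<Sum>l = 0..<m. if l = j then Y $$ (i,l) * T $$ (l,j) else 0)"
  proof (rule sum.cong)
    fix l assume "l \<in> {0..<m}"
    then show "Y $$ (i,l) * T $$ (l,j) = (if l = j then Y $$ (i,l) * T $$ (l,j) else 0)"
      using assms earlier_cols_zero[of l] unfolding upper_triangular_def
      by (cases "l < j") auto
  qed simp
  finally show ?thesis using assms by simp
qed

lemma sylvester_upper_triangular_zero:
  fixes Y T N :: "'a :: field mat"
  assumes Y: "Y \<in> carrier_mat m m" and T: "T \<in> carrier_mat m m" and N: "N \<in> carrier_mat m m"
    and ut: "upper_triangular T" and eq: "Y * T + N * Y = 0\<^sub>m m m"
    and spectra: "\<And>j. j < m \<Longrightarrow> \<not> eigenvalue N (- T $$ (j,j))"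
  shows "Y = 0\<^sub>m m m"
proof -
  have "\<forall>i<m. Y $$ (i,j) = 0" if "j < m" for j
    using that
  proof (induction j rule: less_induct)
    case (less j)
    have "(N *\<^sub>v col Y j) $ i = (- T $$ (j,j)) * col Y j $ i" if i: "i < m" for i
    proof -
      have "(Y * T) $$ (i,j) + (N * Y) $$ (i,j) = 0"
        using arg_cong[OF eq, of "\<lambda>M. M $$ (i,j)"] i less.prems Y T N by simp
      moreover have "(Y * T) $$ (i,j) = Y $$ (i,j) * T $$ (j,j)"
        using less i by (intro index_mult_upper_triangular[OF Y T ut]) auto
      ultimately show ?thesis
        using i less.prems Y N by (simp add: eq_neg_iff_add_eq_0 algebra_simps)
    qed
    then have "N *\<^sub>v col Y j = (- T $$ (j,j)) \<cdot>\<^sub>v col Y j"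
      using Y N by (intro eq_vecI) auto
    then have "col Y j = 0\<^sub>v m"
      using spectra[OF less.prems] Y N col_dim[of Y j] unfolding eigenvalue_def eigenvector_def by auto
    then show ?case
      using Y less.prems by (auto simp: vec_eq_iff)
  qed
  then show ?thesis
    using Y by (intro eq_matI) auto
qed

lemma sylvester_zero:
  fixes X M N :: "complex mat"
  assumes X: "X \<in> carrier_mat m m" and M: "M \<in> carrier_mat m m" and N: "N \<in> carrier_mat m m"
    and eq: "X * M + N * X = 0\<^sub>m m m"
    and spectra: "\<And>z. eigenvalue M z \<Longrightarrow> \<not> eigenvalue N (- z)"
  shows "X = 0\<^sub>m m m"
proof -
  obtain es where char_poly: "char_poly M = (\<Prod>a\<leftarrow>es. [:- a, 1:])"
    using char_poly_factorized[OF M] by blast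
  obtain T S S' where "schur_decomposition M es = (T, S, S')"
    by (cases "schur_decomposition M es") auto
  from schur_decomposition[OF M char_poly this]
  have "similar_mat_wit M T S S'" and ut: "upper_triangular T" and diag: "diag_mat T = es" by auto
  then have T: "T \<in> carrier_mat m m" and S: "S \<in> carrier_mat m m" and S': "S' \<in> carrier_mat m m"
    and "S * S' = 1\<^sub>m m" "S' * S = 1\<^sub>m m" and M_eq: "M = S * T * S'"
    using M unfolding similar_mat_wit_def Let_def by auto
  have "eigenvalue M (T $$ (j,j))" if "j < m" for j
  proof -
    have "T $$ (j,j) \<in> set es" using diag that T unfolding diag_mat_def by auto
    then show ?thesis
      unfolding eigenvalue_root_char_poly[OF M] char_poly poly_prod_list by (auto simp: prod_list_zero_iff)
  qed
  moreover have "(X * S) * T + N * (X * S) = 0\<^sub>m m m"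
  proof -
    have "M * S = S * T * (S' * S)"
      unfolding M_eq using S T S' by (simp add: assoc_mult_mat[of _ m m _ m _ m])
    then have "M * S = S * T"
      using \<open>S' * S = 1\<^sub>m m\<close> S T by simp
    then have "(X * S) * T = X * M * S"
      using X S T M by (simp add: assoc_mult_mat[of _ m m _ m _ m])
    moreover have "N * (X * S) = N * X * S"
      using X S N by (simp add: assoc_mult_mat[of _ m m _ m _ m])
    ultimately have "(X * S) * T + N * (X * S) = (X * M + N * X) * S"
      using X S N M by (simp add: add_mult_distrib_mat[of _ m m _ _ m])
    then show ?thesis using eq S by simp
  qed
  ultimately have "X * S = 0\<^sub>m m m"
    using spectra by (intro sylvester_upper_triangular_zero[OF mult_carrier_mat[OF X S] T N ut]) auto
  moreover have "X = X * S * S'"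
    using X S S' \<open>S * S' = 1\<^sub>m m\<close> by (simp add: assoc_mult_mat[of _ m m _ m _ m])
  ultimately show ?thesis
    using S' by simp
qed

lemma map_mat_complex_of_real_inj:
  "map_mat complex_of_real A = map_mat complex_of_real B \<Longrightarrow> A = B"
  by (rule of_real_hom.mat_hom_inj)

lemma map_mat_complex_of_real_zero [simp]: "map_mat complex_of_real (0\<^sub>m n m) = 0\<^sub>m n m"
  by (rule eq_matI) auto

lemma sylvester_hurwitz_zero:
  fixes X M N :: "real mat"
  assumes X: "X \<in> carrier_mat m m" and M: "M \<in> carrier_mat m m" and N: "N \<in> carrier_mat m m"
    and eq: "X * M + N * X = 0\<^sub>m m m" and "hurwitz M" "hurwitz N"
  shows "X = 0\<^sub>m m m"
proof -
  have "map_mat complex_of_real (X * M + N * X) =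
      map_mat complex_of_real (X * M) + map_mat complex_of_real (N * X)"
    using X M N by (intro eq_matI) auto
  also have "\<dots> = map_mat complex_of_real X * map_mat complex_of_real M
      + map_mat complex_of_real N * map_mat complex_of_real X"
    using X M N by (simp add: of_real_hom.mat_hom_mult[of _ m m _ m])
  finally have "map_mat complex_of_real X * map_mat complex_of_real M
      + map_mat complex_of_real N * map_mat complex_of_real X = 0\<^sub>m m m"
    using eq by simp
  then have "map_mat complex_of_real X = 0\<^sub>m m m"
  proof (rule sylvester_zero[rotated 3])
    show "\<not> eigenvalue (map_mat complex_of_real N) (- z)" if "eigenvalue (map_mat complex_of_real M) z" for z
      using \<open>hurwitz M\<close> \<open>hurwitz N\<close> that unfolding hurwitz_def by force
  qed (use X M N in auto)
  then show ?thesis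
    by (intro map_mat_complex_of_real_inj) auto
qed

lemma eigenvalue_transpose:
  fixes M :: "'a :: field mat"
  assumes "M \<in> carrier_mat m m"
  shows "eigenvalue (transpose_mat M) z \<longleftrightarrow> eigenvalue M z"
  using assms eigenvalue_root_char_poly[OF assms] eigenvalue_root_char_poly[of "transpose_mat M" m]
  by simp

lemma hurwitz_transpose:
  assumes "M \<in> carrier_mat m m"
  shows "hurwitz (transpose_mat M) \<longleftrightarrow> hurwitz M"
proof -
  have "map_mat complex_of_real (transpose_mat M) = transpose_mat (map_mat complex_of_real M)"
    by (rule eq_matI) auto
  then show ?thesis
    using assms eigenvalue_transpose[of "map_mat complex_of_real M" m] unfolding hurwitz_def by simp
qed

lemma care_solutionD:
  fixes A B Q R P :: "real mat"
  assumes "care_solution A B Q R P"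
    and B: "B \<in> carrier_mat m k" and Ri: "mat_inv R \<in> carrier_mat k k" and "dim_row A = m"
  defines "G \<equiv> B * mat_inv R * transpose_mat B"
  shows "P \<in> carrier_mat m m" "transpose_mat P = P" "hurwitz (A - G * P)"
    and "P * A + transpose_mat A * P - P * G * P + Q = 0\<^sub>m m m"
proof -
  show P: "P \<in> carrier_mat m m" and "transpose_mat P = P" "hurwitz (A - G * P)"
    using assms unfolding care_solution_def G_def by auto
  show "P * A + transpose_mat A * P - P * G * P + Q = 0\<^sub>m m m"
    using assms unfolding care_solution_def G_def riccati_quadratic_assoc[OF P B Ri] by auto
qed

lemma care_solution_unique:
  fixes A B Q R P1 P2 :: "real mat"
  assumes A: "A \<in> carrier_mat m m" and B: "B \<in> carrier_mat m k" and Ri: "mat_inv R \<in> carrier_mat k k"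
    and Q: "Q \<in> carrier_mat m m"
    and G_sym: "transpose_mat (B * mat_inv R * transpose_mat B) = B * mat_inv R * transpose_mat B"
    and sol1: "care_solution A B Q R P1" and sol2: "care_solution A B Q R P2"
  shows "P1 = P2"
proof -
  define G where "G = B * mat_inv R * transpose_mat B"
  have G: "G \<in> carrier_mat m m" using B Ri by (simp add: G_def)
  note sol1 = care_solutionD[OF sol1 B Ri carrier_matD(1)[OF A], folded G_def]
  note sol2 = care_solutionD[OF sol2 B Ri carrier_matD(1)[OF A], folded G_def]
  have closed1: "A - G * P1 \<in> carrier_mat m m" and closed2: "A - G * P2 \<in> carrier_mat m m"
    using G sol1(1) sol2(1) by (simp_all add: minus_carrier_mat[of _ m m] mult_carrier_mat[of _ m m])
  have "(P1 - P2) * (A - G * P1) + transpose_mat (A - G * P2) * (P1 - P2) = 0\<^sub>m m m"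
    using A G Q sol1 sol2 G_sym by (intro riccati_difference) (simp_all add: G_def)
  moreover have "transpose_mat (A - G * P2) \<in> carrier_mat m m"
    using closed2 by simp
  moreover have "hurwitz (transpose_mat (A - G * P2))"
    using hurwitz_transpose[OF closed2] sol2(3) by simp
  ultimately have "P1 - P2 = 0\<^sub>m m m"
    using sol1(3) by (intro sylvester_hurwitz_zero[OF minus_carrier_mat[OF sol2(1)] closed1])
  show ?thesis
  proof (rule eq_matI)
    fix i j assume "i < dim_row P2" "j < dim_col P2"
    then show "P1 $$ (i,j) = P2 $$ (i,j)"
      using arg_cong[OF \<open>P1 - P2 = 0\<^sub>m m m\<close>, of "\<lambda>M. M $$ (i,j)"] sol1(1) sol2(1) by simp
  qed (use sol1(1) sol2(1) in simp_all)
qed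

section \<open>Unitarity of the DFT\<close>

lemma mat_inv_eqI:
  fixes M M' :: "'a :: field mat"
  assumes M: "M \<in> carrier_mat n n" and M': "M' \<in> carrier_mat n n"
    and "M * M' = 1\<^sub>m n" "M' * M = 1\<^sub>m n"
  shows "mat_inv M = M'"
  unfolding mat_inv_def
proof (rule the_equality)
  fix X assume "X \<in> carrier_mat (dim_row M) (dim_row M) \<and> M * X = 1\<^sub>m (dim_row M) \<and> X * M = 1\<^sub>m (dim_row M)"
  then have X: "X \<in> carrier_mat n n" and XM: "X * M = 1\<^sub>m n" using M by auto
  have "X = X * (M * M')" using assms X by simp
  also have "\<dots> = (X * M) * M'" using assms X by (simp add: assoc_mult_mat)
  finally show "X = M'" using XM M' by simp
qed (use assms in auto)

lemma dim_mat_adjoint [simp]: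
  "dim_row (mat_adjoint A) = dim_col A" "dim_col (mat_adjoint A) = dim_row A"
  by (simp_all add: mat_adjoint_def)

lemma mat_adjoint_carrier [simp]: "mat_adjoint A \<in> carrier_mat (dim_col A) (dim_row A)"
  by (rule carrier_matI) simp_all

lemma index_mat_adjoint [simp]:
  "i < dim_col A \<Longrightarrow> j < dim_row A \<Longrightarrow> mat_adjoint A $$ (i,j) = conjugate (A $$ (j,i))"
  unfolding mat_adjoint_def by (subst mat_of_rows_index) simp_all

lemma sum_roots_of_unity:
  assumes "n > 0"
  shows "(\<Sum>k = 0..<n. cis (2 * pi * real k * of_int m / real n)) = (if int n dvd m then of_nat n else 0)"
proof -
  define z where "z = cis (2 * pi * of_int m / real n)"
  have powers: "cis (2 * pi * real k * of_int m / real n) = z ^ k" for k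
    by (simp add: z_def DeMoivre mult_ac)
  have z_iff: "z = 1 \<longleftrightarrow> int n dvd m"
  proof
    assume "z = 1"
    then have "cos (2 * pi * of_int m / real n) = 1"
      unfolding z_def by (metis cis.sel(1) one_complex.sel(1))
    then obtain x :: int where "2 * pi * of_int m / real n = real_of_int x * 2 * pi"
      using cos_one_2pi_int by blast
    then have "real_of_int m = real_of_int (x * int n)" using assms by (simp add: field_simps)
    then show "int n dvd m" by (simp only: of_int_eq_iff) simp
  next
    assume "int n dvd m"
    then obtain q where "m = int n * q" by blast
    then have "2 * pi * of_int m / real n = 2 * pi * real_of_int q" using assms by simp
    then show "z = 1" by (metis z_def cis_multiple_2pi Ints_of_int)
  qed
  have "z ^ n = cis (2 * pi * of_int m)" using assms by (simp add: z_def DeMoivre)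
  also have "\<dots> = 1" by (rule cis_multiple_2pi) simp
  finally have "z ^ n = 1" .
  then show ?thesis
    using z_iff by (simp add: powers atLeast0LessThan sum_gp_strict)
qed

lemma int_dvd_diff_iff_eq:
  assumes "i < n" "j < n"
  shows "int n dvd (int i - int j) \<longleftrightarrow> i = j"
proof
  assume dvd: "int n dvd (int i - int j)"
  show "i = j"
  proof (rule ccontr)
    assume "i \<noteq> j"
    then have "int n \<le> \<bar>int i - int j\<bar>" using dvd_imp_le_int[OF _ dvd] by simp
    then show False using assms by linarith
  qed
qed simp

lemma DFT_carrier [simp]: "DFT n \<in> carrier_mat n n"
  and dim_DFT [simp]: "dim_row (DFT n) = n" "dim_col (DFT n) = n"
  by (simp_all add: DFT_def)

lemma index_DFT:
  "k < n \<Longrightarrow> j < n \<Longrightarrow>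
   DFT n $$ (k,j) = complex_of_real (1 / sqrt (real n)) * cis (- 2 * pi * real k * real j / real n)"
  by (simp add: DFT_def)

lemma DFT_symmetric: "k < n \<Longrightarrow> j < n \<Longrightarrow> DFT n $$ (k,j) = DFT n $$ (j,k)"
  by (simp add: index_DFT mult_ac)

lemma mat_adjoint_DFT_carrier [simp]: "mat_adjoint (DFT n) \<in> carrier_mat n n"
  using mat_adjoint_carrier[of "DFT n"] by simp

lemma cnj_DFT_mult_DFT:
  assumes "k < n" "i < n" "j < n"
  shows "cnj (DFT n $$ (k,i)) * DFT n $$ (k,j) =
    cis (2 * pi * real k * of_int (int i - int j) / real n) / of_nat n"
proof -
  have "cnj (complex_of_real (1 / sqrt (real n))) * complex_of_real (1 / sqrt (real n)) = 1 / of_nat n"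
    using assms by (simp flip: of_real_mult)
  moreover have "cnj (cis (- 2 * pi * real k * real i / real n)) * cis (- 2 * pi * real k * real j / real n)
      = cis (2 * pi * real k * of_int (int i - int j) / real n)"
    by (simp add: cis_cnj cis_mult algebra_simps diff_divide_distrib)
  ultimately show ?thesis
    using assms by (simp add: index_DFT mult_ac)
qed

lemma sum_cnj_DFT_mult_DFT:
  assumes "i < n" "j < n"
  shows "(\<Sum>k = 0..<n. cnj (DFT n $$ (k,i)) * DFT n $$ (k,j)) = (if i = j then 1 else 0)"
  using assms sum_roots_of_unity[of n "int i - int j"] int_dvd_diff_iff_eq[OF assms]
  by (simp add: cnj_DFT_mult_DFT flip: sum_divide_distrib)

lemma mat_adjoint_DFT_mult_DFT: "mat_adjoint (DFT n) * DFT n = 1\<^sub>m n"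
  by (rule eq_matI) (simp_all add: scalar_prod_def sum_cnj_DFT_mult_DFT)

lemma DFT_mult_mat_adjoint_DFT: "DFT n * mat_adjoint (DFT n) = 1\<^sub>m n"
proof (rule eq_matI)
  fix i j assume "i < dim_row (1\<^sub>m n :: complex mat)" "j < dim_col (1\<^sub>m n :: complex mat)"
  then have ij: "i < n" "j < n" by simp_all
  have "(DFT n * mat_adjoint (DFT n)) $$ (i,j) = (\<Sum>k = 0..<n. DFT n $$ (i,k) * cnj (DFT n $$ (j,k)))"
    using ij by (simp add: scalar_prod_def)
  also have "\<dots> = (\<Sum>k = 0..<n. cnj (DFT n $$ (k,j)) * DFT n $$ (k,i))"
  proof (rule sum.cong)
    fix k assume "k \<in> {0..<n}"
    then show "DFT n $$ (i,k) * cnj (DFT n $$ (j,k)) = cnj (DFT n $$ (k,j)) * DFT n $$ (k,i)"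
      using ij DFT_symmetric[of k n i] DFT_symmetric[of k n j] by simp
  qed simp
  finally show "(DFT n * mat_adjoint (DFT n)) $$ (i,j) = 1\<^sub>m n $$ (i,j)"
    using ij by (simp add: sum_cnj_DFT_mult_DFT)
qed simp_all

lemma mat_inv_DFT: "mat_inv (DFT n) = mat_adjoint (DFT n)"
  by (rule mat_inv_eqI[of _ n]) (simp_all add: DFT_mult_mat_adjoint_DFT mat_adjoint_DFT_mult_DFT)

lemma DFT_mult_vec_carrier [simp]: "w \<in> carrier_vec n \<Longrightarrow> DFT n *\<^sub>v w \<in> carrier_vec n"
  by (rule mult_mat_vec_carrier[OF DFT_carrier])

lemma mult_mat_vec_zero: "A \<in> carrier_mat n m \<Longrightarrow> A *\<^sub>v 0\<^sub>v m = 0\<^sub>v n"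
  by (intro eq_vecI) auto

lemma DFT_mult_vec_eq_zero_iff:
  assumes "a \<in> carrier_vec n"
  shows "DFT n *\<^sub>v a = 0\<^sub>v n \<longleftrightarrow> a = 0\<^sub>v n"
proof
  have "a = mat_adjoint (DFT n) *\<^sub>v (DFT n *\<^sub>v a)"
    using assms by (simp flip: assoc_mult_mat_vec[of _ n n _ n] add: mat_adjoint_DFT_mult_DFT)
  then show "DFT n *\<^sub>v a = 0\<^sub>v n \<Longrightarrow> a = 0\<^sub>v n"
    by (simp add: mult_mat_vec_zero[of _ n n])
qed (simp add: mult_mat_vec_zero[of _ n n])

section \<open>Fourier multipliers\<close>

lemma diag_c_carrier [simp]: "diag_c n f \<in> carrier_mat n n"
  and dim_diag_c [simp]: "dim_row (diag_c n f) = n" "dim_col (diag_c n f) = n"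
  by (simp_all add: diag_c_def)

lemma index_mult_diag_c:
  assumes "M \<in> carrier_mat m n" "i < m" "j < n"
  shows "(M * diag_c n f) $$ (i,j) = M $$ (i,j) * f j"
proof -
  have "(M * diag_c n f) $$ (i,j) = (\<Sum>l = 0..<n. if l = j then M $$ (i,l) * f l else 0)"
    using assms by (simp add: scalar_prod_def diag_c_def if_distrib cong: if_cong)
  then show ?thesis using assms by simp
qed

lemma index_diag_c_mult_vec:
  assumes "w \<in> carrier_vec n" "k < n"
  shows "(diag_c n f *\<^sub>v w) $ k = f k * w $ k"
proof -
  have "(diag_c n f *\<^sub>v w) $ k = (\<Sum>l = 0..<n. (if k = l then f k else 0) * w $ l)"
    using assms by (simp add: scalar_prod_def diag_c_def)
  also have "\<dots> = (\<Sum>l = 0..<n. if l = k then f k * w $ k else 0)"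
    by (rule sum.cong) auto
  finally show ?thesis using assms by simp
qed

lemma diag_c_mult_diag_c: "diag_c n f * diag_c n g = diag_c n (\<lambda>k. f k * g k)"
proof (rule eq_matI)
  fix i j assume "i < dim_row (diag_c n (\<lambda>k. f k * g k))" "j < dim_col (diag_c n (\<lambda>k. f k * g k))"
  then have "i < n" "j < n" by simp_all
  then show "(diag_c n f * diag_c n g) $$ (i,j) = diag_c n (\<lambda>k. f k * g k) $$ (i,j)"
    by (subst index_mult_diag_c[of _ n n]) (simp_all add: diag_c_def)
qed simp_all

definition fourier_mult :: "nat \<Rightarrow> (nat \<Rightarrow> complex) \<Rightarrow> complex mat" where
  "fourier_mult n f = mat_adjoint (DFT n) * diag_c n f * DFT n"

lemma fourier_mult_carrier [simp]: "fourier_mult n f \<in> carrier_mat n n"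
  unfolding fourier_mult_def by (metis mult_carrier_mat DFT_carrier mat_adjoint_DFT_carrier diag_c_carrier)

lemma dim_fourier_mult [simp]: "dim_row (fourier_mult n f) = n" "dim_col (fourier_mult n f) = n"
  using carrier_matD[OF fourier_mult_carrier] by blast+

lemma fourier_mult_vec_carrier [simp]: "w \<in> carrier_vec n \<Longrightarrow> fourier_mult n f *\<^sub>v w \<in> carrier_vec n"
  by (rule mult_mat_vec_carrier[OF fourier_mult_carrier])

lemma DFT_mult_mat_adjoint_DFT_cancel: "X \<in> carrier_mat n m \<Longrightarrow> DFT n * (mat_adjoint (DFT n) * X) = X"
  by (simp flip: assoc_mult_mat[of _ n n _ n] add: DFT_mult_mat_adjoint_DFT)

lemma fourier_mult_assoc: "fourier_mult n f = mat_adjoint (DFT n) * (diag_c n f * DFT n)"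
  unfolding fourier_mult_def by (rule assoc_mult_mat[of _ n n _ n _ n]) simp_all

lemma DFT_mult_fourier_mult: "DFT n * fourier_mult n f = diag_c n f * DFT n"
  unfolding fourier_mult_assoc by (rule DFT_mult_mat_adjoint_DFT_cancel[of _ n n]) (simp add: mult_carrier_mat[of _ n n])

lemma fourier_mult_mult: "fourier_mult n f * fourier_mult n g = fourier_mult n (\<lambda>k. f k * g k)"
proof -
  have "fourier_mult n f * fourier_mult n g = mat_adjoint (DFT n) * (diag_c n f * (DFT n * fourier_mult n g))"
    unfolding fourier_mult_assoc by (simp add: assoc_mult_mat[of _ n n _ n _ n] mult_carrier_mat[of _ n n])
  also have "\<dots> = mat_adjoint (DFT n) * ((diag_c n f * diag_c n g) * DFT n)"
    unfolding DFT_mult_fourier_mult by (simp add: assoc_mult_mat[of _ n n _ n _ n])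
  finally show ?thesis by (simp add: fourier_mult_assoc diag_c_mult_diag_c)
qed

lemma fourier_mult_one: "fourier_mult n (\<lambda>_. 1) = 1\<^sub>m n"
proof -
  have "diag_c n (\<lambda>_. 1) = 1\<^sub>m n" by (rule eq_matI) (auto simp: diag_c_def)
  then show ?thesis by (simp add: fourier_mult_def mat_adjoint_DFT_mult_DFT)
qed

lemma index_fourier_mult:
  assumes "i < n" "j < n"
  shows "fourier_mult n f $$ (i,j) =
    (\<Sum>k = 0..<n. f k * cis (2 * pi * real k * of_int (int i - int j) / real n)) / of_nat n"
proof -
  have "fourier_mult n f $$ (i,j) = (\<Sum>k = 0..<n. (mat_adjoint (DFT n) * diag_c n f) $$ (i,k) * DFT n $$ (k,j))"
    using assms by (simp add: fourier_mult_def scalar_prod_def)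
  also have "\<dots> = (\<Sum>k = 0..<n. f k * (cnj (DFT n $$ (k,i)) * DFT n $$ (k,j)))"
  proof (rule sum.cong)
    fix k assume "k \<in> {0..<n}"
    then show "(mat_adjoint (DFT n) * diag_c n f) $$ (i,k) * DFT n $$ (k,j) =
        f k * (cnj (DFT n $$ (k,i)) * DFT n $$ (k,j))"
      using assms by (subst index_mult_diag_c[of _ n n]) simp_all
  qed simp
  finally show ?thesis
    using assms by (simp add: sum_divide_distrib cnj_DFT_mult_DFT)
qed

lemma fourier_mult_add: "fourier_mult n f + fourier_mult n g = fourier_mult n (\<lambda>k. f k + g k)"
  by (rule eq_matI) (auto simp: index_fourier_mult distrib_right sum.distrib add_divide_distrib)

lemma fourier_mult_diff: "fourier_mult n f - fourier_mult n g = fourier_mult n (\<lambda>k. f k - g k)"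
  by (rule eq_matI) (auto simp: index_fourier_mult left_diff_distrib sum_subtractf diff_divide_distrib)

lemma fourier_mult_smult: "c \<cdot>\<^sub>m fourier_mult n f = fourier_mult n (\<lambda>k. c * f k)"
  by (rule eq_matI) (auto simp: index_fourier_mult sum_distrib_left mult_ac)

lemma DFT_mult_vec_fourier_mult:
  assumes "a \<in> carrier_vec n"
  shows "DFT n *\<^sub>v (fourier_mult n f *\<^sub>v a) = diag_c n f *\<^sub>v (DFT n *\<^sub>v a)"
  using assms by (simp flip: assoc_mult_mat_vec[of _ n n _ n] add: DFT_mult_fourier_mult)

lemma scalar_prod_fourier_mult:
  fixes u v :: "complex vec"
  assumes u: "u \<in> carrier_vec n" and v: "v \<in> carrier_vec n" and u_real: "\<And>i. i < n \<Longrightarrow> cnj (u $ i) = u $ i"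
  shows "u \<bullet> (fourier_mult n f *\<^sub>v v) = (\<Sum>k = 0..<n. f k * cnj ((DFT n *\<^sub>v u) $ k) * (DFT n *\<^sub>v v) $ k)"
proof -
  define w where "w = diag_c n f *\<^sub>v (DFT n *\<^sub>v v)"
  have w: "w \<in> carrier_vec n" unfolding w_def by (metis mult_mat_vec_carrier diag_c_carrier DFT_carrier v)
  have "fourier_mult n f *\<^sub>v v = mat_adjoint (DFT n) *\<^sub>v w"
    unfolding fourier_mult_assoc w_def using v
    by (simp add: assoc_mult_mat_vec[of _ n n _ n] mult_carrier_mat[of _ n n])
  then have "u \<bullet> (fourier_mult n f *\<^sub>v v) =
      (\<Sum>i = 0..<n. \<Sum>k = 0..<n. u $ i * cnj (DFT n $$ (k,i)) * w $ k)"
    using u w by (simp add: scalar_prod_def sum_distrib_left mult_ac)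
  also have "\<dots> = (\<Sum>k = 0..<n. (\<Sum>i = 0..<n. cnj (DFT n $$ (k,i)) * u $ i) * w $ k)"
    by (subst sum.swap) (simp add: sum_distrib_left sum_distrib_right mult_ac)
  also have "\<dots> = (\<Sum>k = 0..<n. cnj ((DFT n *\<^sub>v u) $ k) * w $ k)"
    using u u_real by (intro sum.cong) (simp_all add: scalar_prod_def cnj_sum)
  also have "\<dots> = (\<Sum>k = 0..<n. f k * cnj ((DFT n *\<^sub>v u) $ k) * (DFT n *\<^sub>v v) $ k)"
    using index_diag_c_mult_vec[OF mult_mat_vec_carrier[OF DFT_carrier v]]
    by (intro sum.cong) (simp_all add: w_def)
  finally show ?thesis .
qed

lemma zero_mult_mat_vec: "v \<in> carrier_vec m \<Longrightarrow> 0\<^sub>m n m *\<^sub>v v = 0\<^sub>v n"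
  by (intro eq_vecI) (auto simp: scalar_prod_def)

lemma eigenvalue_companion_block:
  fixes A B :: "'a :: field mat"
  assumes A: "A \<in> carrier_mat n n" and B: "B \<in> carrier_mat n n"
    and "eigenvalue (four_block_mat (0\<^sub>m n n) (1\<^sub>m n) A B) z"
  obtains u where "u \<in> carrier_vec n" "u \<noteq> 0\<^sub>v n" "A *\<^sub>v u + z \<cdot>\<^sub>v (B *\<^sub>v u) = (z * z) \<cdot>\<^sub>v u"
proof -
  obtain x where x: "x \<in> carrier_vec (n + n)" and x0: "x \<noteq> 0\<^sub>v (n + n)"
    and eig: "four_block_mat (0\<^sub>m n n) (1\<^sub>m n) A B *\<^sub>v x = z \<cdot>\<^sub>v x"
    using assms(3) B unfolding eigenvalue_def eigenvector_def by auto
  define u where "u = vec_first x n"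
  define v where "v = vec_last x n"
  have u: "u \<in> carrier_vec n" and v: "v \<in> carrier_vec n" by (simp_all add: u_def v_def)
  have x_split: "x = u @\<^sub>v v" using x by (simp add: u_def v_def)
  have "four_block_mat (0\<^sub>m n n) (1\<^sub>m n) A B *\<^sub>v x = v @\<^sub>v (A *\<^sub>v u + B *\<^sub>v v)"
    unfolding x_split using u v A B
    by (subst four_block_mat_mult_vec[of _ n n _ n _ n]) (auto simp: zero_mult_mat_vec)
  moreover have "z \<cdot>\<^sub>v x = (z \<cdot>\<^sub>v u) @\<^sub>v (z \<cdot>\<^sub>v v)"
    unfolding x_split by (rule eq_vecI) (use u v in auto)
  ultimately have v_eq: "v = z \<cdot>\<^sub>v u" and second_row: "A *\<^sub>v u + B *\<^sub>v v = z \<cdot>\<^sub>v v"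
    using eig u v by (simp_all add: append_vec_eq[of v n])
  show ?thesis
  proof
    show "u \<in> carrier_vec n" by (fact u)
    show "u \<noteq> 0\<^sub>v n" using x0 x_split v_eq by auto
    show "A *\<^sub>v u + z \<cdot>\<^sub>v (B *\<^sub>v u) = (z * z) \<cdot>\<^sub>v u"
      using second_row B u by (simp add: v_eq mult_mat_vec[of _ n n] smult_smult_assoc)
  qed
qed

lemma eigenvalue_companion_fourier_mult:
  assumes "eigenvalue (four_block_mat (0\<^sub>m n n) (1\<^sub>m n) (fourier_mult n f) (fourier_mult n g)) z"
  shows "\<exists>k<n. z * z = g k * z + f k"
proof -
  obtain u where u: "u \<in> carrier_vec n" and "u \<noteq> 0\<^sub>v n"
    and eig: "fourier_mult n f *\<^sub>v u + z \<cdot>\<^sub>v (fourier_mult n g *\<^sub>v u) = (z * z) \<cdot>\<^sub>v u"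
    using eigenvalue_companion_block[OF fourier_mult_carrier fourier_mult_carrier assms] by blast
  define w where "w = DFT n *\<^sub>v u"
  have w: "w \<in> carrier_vec n" unfolding w_def using u by simp
  have "w \<noteq> 0\<^sub>v n"
    using \<open>u \<noteq> 0\<^sub>v n\<close> DFT_mult_vec_eq_zero_iff[OF u] by (simp add: w_def)
  then obtain k where k: "k < n" and wk: "w $ k \<noteq> 0"
    using w by (auto simp: vec_eq_iff)
  have "diag_c n f *\<^sub>v w + z \<cdot>\<^sub>v (diag_c n g *\<^sub>v w) = (z * z) \<cdot>\<^sub>v w"
    using arg_cong[OF eig, of "\<lambda>y. DFT n *\<^sub>v y"] u
    by (simp add: w_def mult_add_distrib_mat_vec[of _ n n] mult_mat_vec[of _ n n] DFT_mult_vec_fourier_mult)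
  then have "(diag_c n f *\<^sub>v w + z \<cdot>\<^sub>v (diag_c n g *\<^sub>v w)) $ k = ((z * z) \<cdot>\<^sub>v w) $ k"
    by (rule arg_cong)
  then have "(diag_c n f *\<^sub>v w) $ k + z * (diag_c n g *\<^sub>v w) $ k = z * z * w $ k"
    using k w by (simp del: index_mult_mat_vec)
  then have "(z * z - g k * z - f k) * w $ k = 0"
    using index_diag_c_mult_vec[OF w k] by (simp add: algebra_simps)
  then have "z * z - g k * z - f k = 0"
    using wk by simp
  then show ?thesis
    using k by (metis diff_diff_eq eq_iff_diff_eq_0)
qed

section \<open>Real functions of the discrete Laplacian\<close>

(* fun_D2 n \<phi> is the matrix function \<phi>(D2 n): the DFT diagonalises D2 n with eigenvalues Dhat n k,
   so \<phi>(D2 n) is the Fourier multiplier with symbol \<phi> (Dhat n k), which is a real matrix. *)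

definition D2_symbol :: "nat \<Rightarrow> (real \<Rightarrow> real) \<Rightarrow> nat \<Rightarrow> complex" where
  "D2_symbol n \<phi> k = complex_of_real (\<phi> (Dhat n k))"

definition fun_D2 :: "nat \<Rightarrow> (real \<Rightarrow> real) \<Rightarrow> real mat" where
  "fun_D2 n \<phi> = map_mat Re (fourier_mult n (D2_symbol n \<phi>))"

lemma fun_D2_carrier [simp]: "fun_D2 n \<phi> \<in> carrier_mat n n"
  and dim_fun_D2 [simp]: "dim_row (fun_D2 n \<phi>) = n" "dim_col (fun_D2 n \<phi>) = n"
  by (simp_all add: fun_D2_def)

lemma fun_D2_mult_vec_carrier [simp]: "w \<in> carrier_vec n \<Longrightarrow> fun_D2 n \<phi> *\<^sub>v w \<in> carrier_vec n"
  by (rule mult_mat_vec_carrier[OF fun_D2_carrier])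

lemma Dhat_reflect: "0 < k \<Longrightarrow> k < n \<Longrightarrow> Dhat n (n - k) = Dhat n k"
proof -
  assume k: "0 < k" "k < n"
  then have "pi * real (n - k) / real n = pi - pi * real k / real n"
    by (simp add: of_nat_diff field_simps)
  then show ?thesis by (simp add: Dhat_def)
qed

lemma sum_Dhat_sin_eq_0:
  "(\<Sum>k = 0..<n. \<phi> (Dhat n k) * sin (2 * pi * real k * of_int m / real n)) = 0"
proof (cases "n = 0")
  case False
  define g where "g k = \<phi> (Dhat n k) * sin (2 * pi * real k * of_int m / real n)" for k
  define \<sigma> where "\<sigma> k = (n - k) mod n" for k
  have "\<sigma> (\<sigma> k) = k" if "k < n" for k
    using that by (cases "k = 0") (simp_all add: \<sigma>_def)
  moreover have "\<sigma> k < n" for k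
    using \<open>n \<noteq> 0\<close> by (simp add: \<sigma>_def)
  ultimately have bij: "bij_betw \<sigma> {0..<n} {0..<n}"
    by (intro bij_betw_byWitness[where f' = \<sigma>]) auto
  have "g (\<sigma> k) = - g k" if "k < n" for k
  proof (cases "k = 0")
    case False
    have "2 * pi * real (n - k) * of_int m / real n = 2 * pi * of_int m - 2 * pi * real k * of_int m / real n"
      using that \<open>n \<noteq> 0\<close> by (simp add: of_nat_diff field_simps)
    moreover have "sin (2 * pi * of_int m - y) = - sin y" for y
      by (simp add: sin_diff mult.assoc[symmetric] sin_times_pi_eq_0 cos_one_2pi_int)
    ultimately show ?thesis
      using False that by (simp add: g_def \<sigma>_def Dhat_reflect)
  qed (simp add: g_def \<sigma>_def)
  then have "sum g {0..<n} = - sum g {0..<n}"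
    using sum.reindex_bij_betw[OF bij, of g] by (simp add: sum_negf)
  then show ?thesis by (simp add: g_def)
qed simp

lemma of_real_fun_D2: "map_mat complex_of_real (fun_D2 n \<phi>) = fourier_mult n (D2_symbol n \<phi>)"
proof (rule eq_matI)
  fix i j assume "i < dim_row (fourier_mult n (D2_symbol n \<phi>))" "j < dim_col (fourier_mult n (D2_symbol n \<phi>))"
  then have ij: "i < n" "j < n" by simp_all
  have "Im (fourier_mult n (D2_symbol n \<phi>) $$ (i,j)) =
     (\<Sum>k = 0..<n. \<phi> (Dhat n k) * sin (2 * pi * real k * of_int (int i - int j) / real n)) / real n"
    using ij by (simp add: index_fourier_mult D2_symbol_def Im_divide_of_nat Im_sum del: of_int_diff)
  then show "map_mat complex_of_real (fun_D2 n \<phi>) $$ (i,j) = fourier_mult n (D2_symbol n \<phi>) $$ (i,j)"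
    using ij by (simp add: fun_D2_def complex_eq_iff sum_Dhat_sin_eq_0 del: of_int_diff)
qed simp_all

lemma index_fun_D2:
  assumes "i < n" "j < n"
  shows "fun_D2 n \<phi> $$ (i,j) =
    (\<Sum>k = 0..<n. \<phi> (Dhat n k) * cos (2 * pi * real k * of_int (int i - int j) / real n)) / real n"
  using assms
  by (simp add: fun_D2_def index_fourier_mult D2_symbol_def Re_divide_of_nat Re_sum del: of_int_diff)

lemma transpose_fun_D2: "transpose_mat (fun_D2 n \<phi>) = fun_D2 n \<phi>"
proof (rule eq_matI)
  fix i j assume "i < dim_row (fun_D2 n \<phi>)" "j < dim_col (fun_D2 n \<phi>)"
  then have ij: "i < n" "j < n" by simp_all
  have "2 * pi * real k * of_int (int j - int i) / real n = - (2 * pi * real k * of_int (int i - int j) / real n)" for k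
    by (cases "n = 0") (simp_all add: field_simps)
  then show "transpose_mat (fun_D2 n \<phi>) $$ (i,j) = fun_D2 n \<phi> $$ (i,j)"
    using ij by (simp add: index_fun_D2 del: of_int_diff)
qed simp_all

lemma fun_D2_mult: "fun_D2 n \<phi> * fun_D2 n \<psi> = fun_D2 n (\<lambda>x. \<phi> x * \<psi> x)"
proof -
  have "map_mat complex_of_real (fun_D2 n \<phi> * fun_D2 n \<psi>) =
      map_mat complex_of_real (fun_D2 n \<phi>) * map_mat complex_of_real (fun_D2 n \<psi>)"
    by (rule of_real_hom.mat_hom_mult[of _ n n _ n]) simp_all
  then show ?thesis
    by (intro map_mat_complex_of_real_inj)
      (simp add: of_real_fun_D2 fourier_mult_mult D2_symbol_def[abs_def])
qed

lemma fun_D2_add: "fun_D2 n \<phi> + fun_D2 n \<psi> = fun_D2 n (\<lambda>x. \<phi> x + \<psi> x)"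
proof -
  have "map_mat complex_of_real (fun_D2 n \<phi> + fun_D2 n \<psi>) =
      map_mat complex_of_real (fun_D2 n \<phi>) + map_mat complex_of_real (fun_D2 n \<psi>)"
    by (rule eq_matI) auto
  then show ?thesis
    by (intro map_mat_complex_of_real_inj) (simp add: of_real_fun_D2 fourier_mult_add D2_symbol_def[abs_def])
qed

lemma fun_D2_diff: "fun_D2 n \<phi> - fun_D2 n \<psi> = fun_D2 n (\<lambda>x. \<phi> x - \<psi> x)"
proof -
  have "map_mat complex_of_real (fun_D2 n \<phi> - fun_D2 n \<psi>) =
      map_mat complex_of_real (fun_D2 n \<phi>) - map_mat complex_of_real (fun_D2 n \<psi>)"
    by (rule eq_matI) auto
  then show ?thesis
    by (intro map_mat_complex_of_real_inj) (simp add: of_real_fun_D2 fourier_mult_diff D2_symbol_def[abs_def])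
qed

lemma fun_D2_const: "fun_D2 n (\<lambda>_. c) = c \<cdot>\<^sub>m 1\<^sub>m n"
proof -
  have "map_mat complex_of_real (c \<cdot>\<^sub>m 1\<^sub>m n) = complex_of_real c \<cdot>\<^sub>m fourier_mult n (\<lambda>_. 1)"
    by (rule eq_matI) (auto simp: fourier_mult_one)
  then show ?thesis
    by (intro map_mat_complex_of_real_inj) (simp add: of_real_fun_D2 fourier_mult_smult D2_symbol_def[abs_def])
qed

lemma fun_D2_one: "fun_D2 n (\<lambda>_. 1) = 1\<^sub>m n"
  by (rule eq_matI) (auto simp: fun_D2_const)

lemma fun_D2_zeroI:
  assumes "\<And>x. \<phi> x = 0"
  shows "fun_D2 n \<phi> = 0\<^sub>m n n"
proof -
  have "\<phi> = (\<lambda>_. 0)" using assms by auto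
  then show ?thesis by (intro eq_matI) (auto simp: fun_D2_const)
qed

lemma scalar_prod_fun_D2:
  fixes u v :: "real vec"
  assumes u: "u \<in> carrier_vec n" and v: "v \<in> carrier_vec n"
  shows "u \<bullet> (fun_D2 n \<phi> *\<^sub>v v) = Re (\<Sum>k = 0..<n. D2_symbol n \<phi> k
    * cnj ((DFT n *\<^sub>v map_vec complex_of_real u) $ k) * (DFT n *\<^sub>v map_vec complex_of_real v) $ k)"
proof -
  have "complex_of_real (u \<bullet> (fun_D2 n \<phi> *\<^sub>v v)) =
      map_vec complex_of_real u \<bullet> map_vec complex_of_real (fun_D2 n \<phi> *\<^sub>v v)"
    using u v by (simp add: scalar_prod_def)
  also have "map_vec complex_of_real (fun_D2 n \<phi> *\<^sub>v v) = map_mat complex_of_real (fun_D2 n \<phi>) *\<^sub>v map_vec complex_of_real v"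
    by (rule of_real_hom.mult_mat_vec_hom[OF fun_D2_carrier v])
  also have "\<dots> = fourier_mult n (D2_symbol n \<phi>) *\<^sub>v map_vec complex_of_real v"
    unfolding of_real_fun_D2 ..
  also have "map_vec complex_of_real u \<bullet> \<dots> = (\<Sum>k = 0..<n. D2_symbol n \<phi> k
      * cnj ((DFT n *\<^sub>v map_vec complex_of_real u) $ k) * (DFT n *\<^sub>v map_vec complex_of_real v) $ k)"
    using u v by (intro scalar_prod_fourier_mult) auto
  finally show ?thesis by (metis Re_complex_of_real)
qed

lemma eq_Suc_mod_iff_dvd:
  assumes "j < n"
  shows "j = (i + 1) mod n \<longleftrightarrow> int n dvd (int i - int j + 1)"
proof -
  have "j = (i + 1) mod n \<longleftrightarrow> int (i + 1) mod int n = int j mod int n"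
    using assms by (metis mod_less of_nat_eq_iff zmod_int)
  also have "\<dots> \<longleftrightarrow> int n dvd (int (i + 1) - int j)" by (rule mod_eq_dvd_iff)
  finally show ?thesis by (simp add: algebra_simps)
qed

lemma index_D2_dvd:
  assumes "i < n" "j < n"
  defines "m \<equiv> int i - int j"
  shows "D2 n $$ (i,j) = (if int n dvd m then -2 else 0)
    + (if int n dvd (m + 1) then 1 else 0) + (if int n dvd (m - 1) then 1 else 0)"
proof -
  have "i = (j + 1) mod n \<longleftrightarrow> int n dvd (m - 1)"
    using eq_Suc_mod_iff_dvd[OF assms(1), of j] dvd_minus_iff[of "int n" "m - 1"]
    by (simp add: m_def algebra_simps)
  then show ?thesis
    using assms eq_Suc_mod_iff_dvd[OF assms(2), of i] int_dvd_diff_iff_eq[OF assms(1,2)]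
    by (simp add: D2_def m_def)
qed

lemma of_real_Dhat: "complex_of_real (Dhat n k) = cis (2 * pi * real k / real n) + cis (- (2 * pi * real k / real n)) - 2"
proof -
  have "Dhat n k = 2 * cos (2 * pi * real k / real n) - 2"
    using cos_double_sin[of "pi * real k / real n"] by (simp add: Dhat_def algebra_simps)
  then show ?thesis by (simp add: complex_eq_iff)
qed

lemma index_fourier_mult_Dhat:
  assumes "i < n" "j < n"
  defines "m \<equiv> int i - int j"
  shows "fourier_mult n (D2_symbol n (\<lambda>x. x)) $$ (i,j) = (if int n dvd m then -2 else 0)
    + (if int n dvd (m + 1) then 1 else 0) + (if int n dvd (m - 1) then 1 else 0)"
proof -
  have n: "n > 0" using assms by simp
  define e where "e k t = cis (2 * pi * real k * of_int t / real n)" for k t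
  have "D2_symbol n (\<lambda>x. x) k * e k m = e k (m + 1) + e k (m - 1) - 2 * e k m" for k
    using n by (simp add: D2_symbol_def of_real_Dhat e_def algebra_simps cis_mult add_divide_distrib
        diff_divide_distrib)
  then have "fourier_mult n (D2_symbol n (\<lambda>x. x)) $$ (i,j) =
      ((\<Sum>k = 0..<n. e k (m + 1)) + (\<Sum>k = 0..<n. e k (m - 1)) - 2 * (\<Sum>k = 0..<n. e k m)) / of_nat n"
    using assms by (simp add: index_fourier_mult e_def[symmetric] sum.distrib sum_subtractf sum_distrib_left
        del: of_int_diff)
  also have "\<dots> = ((if int n dvd (m + 1) then of_nat n else 0) + (if int n dvd (m - 1) then of_nat n else 0)
      - 2 * (if int n dvd m then of_nat n else 0)) / of_nat n"
    unfolding e_def by (simp only: sum_roots_of_unity[OF n])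
  finally show ?thesis
    using n by simp
qed

lemma D2_carrier: "D2 n \<in> carrier_mat n n"
  and dim_D2 [simp]: "dim_row (D2 n) = n" "dim_col (D2 n) = n"
  by (simp_all add: D2_def)

lemma fun_D2_id: "n > 0 \<Longrightarrow> fun_D2 n (\<lambda>x. x) = D2 n"
  by (intro map_mat_complex_of_real_inj eq_matI)
    (simp_all add: of_real_fun_D2 index_fourier_mult_Dhat index_D2_dvd)

section \<open>The LQR data in block form\<close>

lemma minus_four_block_mat:
  assumes "A1 \<in> carrier_mat nr1 nc1" "B1 \<in> carrier_mat nr1 nc2" "C1 \<in> carrier_mat nr2 nc1" "E1 \<in> carrier_mat nr2 nc2"
    and "A2 \<in> carrier_mat nr1 nc1" "B2 \<in> carrier_mat nr1 nc2" "C2 \<in> carrier_mat nr2 nc1" "E2 \<in> carrier_mat nr2 nc2"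
  shows "four_block_mat A1 B1 C1 E1 - four_block_mat A2 B2 C2 E2 =
    four_block_mat (A1 - A2) (B1 - B2) (C1 - C2) (E1 - E2)"
  by (rule eq_matI) (use assms in auto)

lemma mat_inv_Rmat: "\<Pi>3 \<noteq> 0 \<Longrightarrow> mat_inv (Rmat n \<Pi>3) = \<Pi>3\<^sup>2 \<cdot>\<^sub>m 1\<^sub>m n"
  unfolding Rmat_def by (rule mat_inv_eqI[of _ n]) (auto simp: mult_smult_distrib[of _ n n _ n])

lemma Amat_carrier: "Amat n \<in> carrier_mat (n + n) (n + n)"
  by (simp add: Amat_def D2_carrier)

lemma Qmat_carrier: "Qmat n \<Pi>2 \<in> carrier_mat (n + n) (n + n)"
  by (simp add: Qmat_def)

lemma Bmat_blocks: "Bmat n = four_block_mat (0\<^sub>m n n) (0\<^sub>m n 0) (1\<^sub>m n) (0\<^sub>m n 0)"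
  by (simp add: Bmat_def append_rows_def)

lemma Bmat_carrier: "Bmat n \<in> carrier_mat (n + n) n"
  unfolding Bmat_blocks by (metis four_block_carrier_mat zero_carrier_mat one_carrier_mat add_0_right)

lemma transpose_Bmat: "transpose_mat (Bmat n) = four_block_mat (0\<^sub>m n n) (1\<^sub>m n) (0\<^sub>m 0 n) (0\<^sub>m 0 n)"
  unfolding Bmat_blocks by (subst transpose_four_block_mat[of _ n n _ 0 _ n]) auto

lemma Amat_blocks: "n > 0 \<Longrightarrow> Amat n = four_block_mat (0\<^sub>m n n) (1\<^sub>m n) (fun_D2 n (\<lambda>x. x)) (0\<^sub>m n n)"
  by (simp add: Amat_def fun_D2_id)

lemma transpose_Amat:
  "n > 0 \<Longrightarrow> transpose_mat (Amat n) = four_block_mat (0\<^sub>m n n) (fun_D2 n (\<lambda>x. x)) (1\<^sub>m n) (0\<^sub>m n n)"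
  unfolding Amat_blocks by (subst transpose_four_block_mat[of _ n n _ n _ n]) (auto simp: transpose_fun_D2)

lemma Qmat_blocks: "Qmat n \<Pi>2 = four_block_mat (fun_D2 n (\<lambda>_. 1)) (0\<^sub>m n n) (0\<^sub>m n n) (fun_D2 n (\<lambda>_. \<Pi>2))"
  unfolding fun_D2_one fun_D2_const Qmat_def ..

lemma Bmat_Rmat_blocks:
  assumes "\<Pi>3 \<noteq> 0"
  shows "Bmat n * mat_inv (Rmat n \<Pi>3) * transpose_mat (Bmat n) =
    four_block_mat (0\<^sub>m n n) (0\<^sub>m n n) (0\<^sub>m n n) (fun_D2 n (\<lambda>_. \<Pi>3\<^sup>2))"
proof -
  have "Bmat n * mat_inv (Rmat n \<Pi>3) * transpose_mat (Bmat n) = \<Pi>3\<^sup>2 \<cdot>\<^sub>m (Bmat n * transpose_mat (Bmat n))"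
    using Bmat_carrier[of n]
    by (simp add: mat_inv_Rmat[OF assms] mult_smult_distrib[of _ "n + n" n _ n]
        mult_smult_assoc_mat[of _ "n + n" n _ "n + n"])
  also have "Bmat n * transpose_mat (Bmat n) = four_block_mat (0\<^sub>m n n) (0\<^sub>m n n) (0\<^sub>m n n) (1\<^sub>m n)"
    unfolding transpose_Bmat unfolding Bmat_blocks
    by (subst mult_four_block_mat[of _ n n _ 0 _ n _ _ n _ n]) auto
  finally show ?thesis
    by (simp add: smult_four_block_mat[of _ n n _ n _ n] fun_D2_const)
qed

lemma lqr_gain_Bmat_Rmat:
  assumes "\<Pi>3 \<noteq> 0"
  shows "lqr_gain (Bmat n) (Rmat n \<Pi>3) P = four_block_mat (0\<^sub>m n n) (fun_D2 n (\<lambda>_. \<Pi>3\<^sup>2)) (0\<^sub>m 0 n) (0\<^sub>m 0 n) * P"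
proof -
  have "mat_inv (Rmat n \<Pi>3) * transpose_mat (Bmat n) = \<Pi>3\<^sup>2 \<cdot>\<^sub>m transpose_mat (Bmat n)"
    using Bmat_carrier[of n] by (simp add: mat_inv_Rmat[OF assms] mult_smult_assoc_mat[of _ n n _ "n + n"])
  then show ?thesis
    by (simp add: lqr_gain_def transpose_Bmat smult_four_block_mat[of _ n n _ n _ 0] fun_D2_const)
qed

section \<open>Decoupling into frequencies\<close>

lemma fun_D2_block_riccati:
  fixes n :: nat and a b e :: "real \<Rightarrow> real"
  assumes upper_left: "\<And>x. 2 * x * b x - c * b x * b x + 1 = 0"
    and off_diagonal: "\<And>x. a x + x * e x - c * b x * e x = 0"
    and lower_right: "\<And>x. 2 * b x - c * e x * e x + p = 0"
  defines "P \<equiv> four_block_mat (fun_D2 n a) (fun_D2 n b) (fun_D2 n b) (fun_D2 n e)"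
  shows "P * four_block_mat (0\<^sub>m n n) (1\<^sub>m n) (fun_D2 n (\<lambda>x. x)) (0\<^sub>m n n)
    + four_block_mat (0\<^sub>m n n) (fun_D2 n (\<lambda>x. x)) (1\<^sub>m n) (0\<^sub>m n n) * P
    - P * four_block_mat (0\<^sub>m n n) (0\<^sub>m n n) (0\<^sub>m n n) (fun_D2 n (\<lambda>_. c)) * P
    + four_block_mat (fun_D2 n (\<lambda>_. 1)) (0\<^sub>m n n) (0\<^sub>m n n) (fun_D2 n (\<lambda>_. p)) = 0\<^sub>m (n + n) (n + n)"
  unfolding P_def
  by (simp add: mult_four_block_mat[of _ n n _ n _ n _ _ n _ n] add_four_block_mat[of _ n n _ n _ n]
      minus_four_block_mat[of _ n n _ n _ n] fun_D2_mult fun_D2_add fun_D2_diff,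
      subst four_block_zero_mat[symmetric, of n n n n], intro cong_four_block_mat fun_D2_zeroI)
    (use upper_left off_diagonal lower_right in \<open>simp_all add: algebra_simps\<close>)

lemma binary_quadratic_form_pos:
  fixes r1 r2 r3 u v :: real
  assumes r1: "r1 > 0" and disc: "r2 * r2 < r1 * r3" and uv: "u \<noteq> 0 \<or> v \<noteq> 0"
  shows "0 < r1 * u * u + 2 * r2 * u * v + r3 * v * v"
proof -
  have "r1 * (r1 * u * u + 2 * r2 * u * v + r3 * v * v) = (r1 * u + r2 * v)\<^sup>2 + (r1 * r3 - r2 * r2) * v\<^sup>2"
    by (simp add: algebra_simps power2_eq_square)
  also have "\<dots> > 0"
  proof (cases "v = 0")
    case True
    then show ?thesis using r1 uv by simp
  next
    case False
    then show ?thesis using disc by (intro add_nonneg_pos) simp_all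
  qed
  finally show ?thesis using r1 by (simp add: zero_less_mult_iff)
qed

lemma binary_quadratic_form_nonneg:
  fixes r1 r2 r3 u v :: real
  assumes "r1 > 0" "r2 * r2 < r1 * r3"
  shows "0 \<le> r1 * u * u + 2 * r2 * u * v + r3 * v * v"
  using binary_quadratic_form_pos[OF assms, of u v] by (cases "u = 0 \<and> v = 0") auto

lemma Re_hermitian_form:
  "Re (complex_of_real r1 * cnj A * A + complex_of_real r2 * cnj A * B + complex_of_real r2 * cnj B * A
      + complex_of_real r3 * cnj B * B) =
    (r1 * Re A * Re A + 2 * r2 * Re A * Re B + r3 * Re B * Re B)
    + (r1 * Im A * Im A + 2 * r2 * Im A * Im B + r3 * Im B * Im B)"
  by (simp add: algebra_simps)

lemma quadratic_form_fun_D2_block: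
  fixes u v :: "real vec"
  assumes u: "u \<in> carrier_vec n" and v: "v \<in> carrier_vec n"
  defines "U \<equiv> DFT n *\<^sub>v map_vec complex_of_real u" and "V \<equiv> DFT n *\<^sub>v map_vec complex_of_real v"
  shows "(u @\<^sub>v v) \<bullet> (four_block_mat (fun_D2 n a) (fun_D2 n b) (fun_D2 n b) (fun_D2 n e) *\<^sub>v (u @\<^sub>v v)) =
    (\<Sum>k = 0..<n. Re (D2_symbol n a k * cnj (U $ k) * U $ k + D2_symbol n b k * cnj (U $ k) * V $ k
      + D2_symbol n b k * cnj (V $ k) * U $ k + D2_symbol n e k * cnj (V $ k) * V $ k))"
proof -
  have block: "four_block_mat (fun_D2 n a) (fun_D2 n b) (fun_D2 n b) (fun_D2 n e) *\<^sub>v (u @\<^sub>v v) =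
      (fun_D2 n a *\<^sub>v u + fun_D2 n b *\<^sub>v v) @\<^sub>v (fun_D2 n b *\<^sub>v u + fun_D2 n e *\<^sub>v v)"
    using u v by (intro four_block_mat_mult_vec[of _ n n _ n _ n]) auto
  have "(u @\<^sub>v v) \<bullet> (four_block_mat (fun_D2 n a) (fun_D2 n b) (fun_D2 n b) (fun_D2 n e) *\<^sub>v (u @\<^sub>v v)) =
      u \<bullet> (fun_D2 n a *\<^sub>v u + fun_D2 n b *\<^sub>v v) + v \<bullet> (fun_D2 n b *\<^sub>v u + fun_D2 n e *\<^sub>v v)"
    unfolding block by (rule scalar_prod_append[of u n v n]) (use u v in auto)
  also have "\<dots> = u \<bullet> (fun_D2 n a *\<^sub>v u) + u \<bullet> (fun_D2 n b *\<^sub>v v) + (v \<bullet> (fun_D2 n b *\<^sub>v u) + v \<bullet> (fun_D2 n e *\<^sub>v v))"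
    using u v by (simp add: scalar_prod_add_distrib[of _ n])
  also have "\<dots> = Re ((\<Sum>k = 0..<n. D2_symbol n a k * cnj (U $ k) * U $ k)
      + (\<Sum>k = 0..<n. D2_symbol n b k * cnj (U $ k) * V $ k)
      + (\<Sum>k = 0..<n. D2_symbol n b k * cnj (V $ k) * U $ k)
      + (\<Sum>k = 0..<n. D2_symbol n e k * cnj (V $ k) * V $ k))"
    using u v by (simp only: scalar_prod_fun_D2 U_def V_def plus_complex.sel add.assoc)
  also have "\<dots> = (\<Sum>k = 0..<n. Re (D2_symbol n a k * cnj (U $ k) * U $ k + D2_symbol n b k * cnj (U $ k) * V $ k
      + D2_symbol n b k * cnj (V $ k) * U $ k + D2_symbol n e k * cnj (V $ k) * V $ k))"
    by (simp only: sum.distrib[symmetric] Re_sum)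
  finally show ?thesis .
qed

lemma pos_def_fun_D2_block:
  fixes a b e :: "real \<Rightarrow> real"
  assumes a_pos: "\<And>x. a x > 0" and disc: "\<And>x. b x * b x < a x * e x"
  shows "pos_def_mat (four_block_mat (fun_D2 n a) (fun_D2 n b) (fun_D2 n b) (fun_D2 n e))"
  unfolding pos_def_mat_def
proof (intro ballI impI)
  fix x :: "real vec"
  assume "x \<in> carrier_vec (dim_row (four_block_mat (fun_D2 n a) (fun_D2 n b) (fun_D2 n b) (fun_D2 n e)))"
    and "x \<noteq> 0\<^sub>v (dim_row (four_block_mat (fun_D2 n a) (fun_D2 n b) (fun_D2 n b) (fun_D2 n e)))"
  then have x: "x \<in> carrier_vec (n + n)" and x0: "x \<noteq> 0\<^sub>v (n + n)" by simp_all
  define u where "u = vec_first x n"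
  define v where "v = vec_last x n"
  have u: "u \<in> carrier_vec n" and v: "v \<in> carrier_vec n" by (simp_all add: u_def v_def)
  have x_split: "x = u @\<^sub>v v" using x by (simp add: u_def v_def)
  define U where "U = DFT n *\<^sub>v map_vec complex_of_real u"
  define V where "V = DFT n *\<^sub>v map_vec complex_of_real v"
  have "u \<noteq> 0\<^sub>v n \<or> v \<noteq> 0\<^sub>v n"
    using x0 x_split by auto
  then have "U \<noteq> 0\<^sub>v n \<or> V \<noteq> 0\<^sub>v n"
    using u v by (auto simp: U_def V_def DFT_mult_vec_eq_zero_iff)
  then obtain k where k: "k < n" and UV: "U $ k \<noteq> 0 \<or> V $ k \<noteq> 0"
    using U_def V_def by (auto simp: vec_eq_iff)
  have "0 < x \<bullet> (four_block_mat (fun_D2 n a) (fun_D2 n b) (fun_D2 n b) (fun_D2 n e) *\<^sub>v x)"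
    unfolding x_split quadratic_form_fun_D2_block[OF u v] U_def[symmetric] V_def[symmetric]
    unfolding D2_symbol_def Re_hermitian_form
  proof (rule sum_pos2[of "{0..<n}" k])
    show "k \<in> {0..<n}" using k by simp
    show "0 < (a (Dhat n k) * Re (U $ k) * Re (U $ k) + 2 * b (Dhat n k) * Re (U $ k) * Re (V $ k)
        + e (Dhat n k) * Re (V $ k) * Re (V $ k)) + (a (Dhat n k) * Im (U $ k) * Im (U $ k)
        + 2 * b (Dhat n k) * Im (U $ k) * Im (V $ k) + e (Dhat n k) * Im (V $ k) * Im (V $ k))"
      using UV binary_quadratic_form_pos[OF a_pos disc] binary_quadratic_form_nonneg[OF a_pos disc]
      by (metis add_nonneg_pos add_pos_nonneg complex_eq_iff zero_complex.sel)
  qed (auto intro: add_nonneg_nonneg binary_quadratic_form_nonneg[OF a_pos disc])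
  then show "0 < x \<bullet> (four_block_mat (fun_D2 n a) (fun_D2 n b) (fun_D2 n b) (fun_D2 n e) *\<^sub>v x)" .
qed

lemma quadratic_root_Re_neg:
  fixes z :: complex and b c :: real
  assumes b: "b > 0" and c: "c > 0" and root: "z * z + of_real b * z + of_real c = 0"
  shows "Re z < 0"
proof (cases "Im z = 0")
  case True
  then have "Re z * Re z + b * Re z + c = 0"
    using arg_cong[OF root, of Re] by simp
  then show ?thesis
    using b c by (smt (verit) mult_nonneg_nonneg)
next
  case False
  have "(2 * Re z + b) * Im z = 0"
    using arg_cong[OF root, of Im] by (simp add: algebra_simps)
  then have "2 * Re z + b = 0"
    using False by simp
  then show ?thesis using b by linarith
qed

section \<open>The stabilising solution\<close>

definition gain1_symbol :: "real \<Rightarrow> real \<Rightarrow> real" where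
  "gain1_symbol c x = x + sqrt (x\<^sup>2 + c)"

definition gain2_symbol :: "real \<Rightarrow> real \<Rightarrow> real \<Rightarrow> real" where
  "gain2_symbol p c x = sqrt (2 * gain1_symbol c x + p * c)"

lemma gain1_symbol_gt: "c > 0 \<Longrightarrow> gain1_symbol c x > x"
  by (simp add: gain1_symbol_def add_nonneg_pos)

lemma gain1_symbol_pos: "c > 0 \<Longrightarrow> gain1_symbol c x > 0"
proof -
  assume "c > 0"
  then have "\<bar>x\<bar> < sqrt (x\<^sup>2 + c)"
    using real_sqrt_less_mono[of "x\<^sup>2" "x\<^sup>2 + c"] by simp
  then show ?thesis unfolding gain1_symbol_def by linarith
qed

lemma gain1_symbol_square: "c > 0 \<Longrightarrow> gain1_symbol c x * gain1_symbol c x = 2 * x * gain1_symbol c x + c"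
proof -
  assume "c > 0"
  then have "sqrt (x\<^sup>2 + c) * sqrt (x\<^sup>2 + c) = x\<^sup>2 + c"
    using add_nonneg_nonneg[OF zero_le_power2[of x] less_imp_le[of 0 c]] by simp
  then show ?thesis unfolding gain1_symbol_def by (simp add: power2_eq_square algebra_simps)
qed

lemma gain2_symbol_pos: "c > 0 \<Longrightarrow> p > 0 \<Longrightarrow> gain2_symbol p c x > 0"
  unfolding gain2_symbol_def using gain1_symbol_pos[of c x] by (simp add: add_pos_pos)

lemma gain2_symbol_square:
  "c > 0 \<Longrightarrow> p > 0 \<Longrightarrow> gain2_symbol p c x * gain2_symbol p c x = 2 * gain1_symbol c x + p * c"
  unfolding gain2_symbol_def using gain1_symbol_pos[of c x] by simp

(* At each frequency the ARE is a 2x2 Riccati equation with A = [[0,1],[d,0]], B = [0;1], Q = diag(1,p),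
   R = 1/c, whose stabilising solution is (1/c) [[k2 (k1 - d), k1], [k1, k2]] with k1 = gain1_symbol c d
   and k2 = gain2_symbol p c d; for c = Pi3^2 and d = Dhat n k these are the paper's K0hat and K2hat. *)

definition riccati_P :: "nat \<Rightarrow> real \<Rightarrow> real \<Rightarrow> real mat" where
  "riccati_P n p c = four_block_mat
     (fun_D2 n (\<lambda>x. gain2_symbol p c x * (gain1_symbol c x - x) / c)) (fun_D2 n (\<lambda>x. gain1_symbol c x / c))
     (fun_D2 n (\<lambda>x. gain1_symbol c x / c)) (fun_D2 n (\<lambda>x. gain2_symbol p c x / c))"

lemma riccati_P_carrier [simp]: "riccati_P n p c \<in> carrier_mat (n + n) (n + n)"
  by (simp add: riccati_P_def)

lemma transpose_riccati_P: "transpose_mat (riccati_P n p c) = riccati_P n p c"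
  unfolding riccati_P_def by (subst transpose_four_block_mat[of _ n n _ n _ n]) (auto simp: transpose_fun_D2)

lemma gain_mult_riccati_P:
  "c \<noteq> 0 \<Longrightarrow> four_block_mat (0\<^sub>m n n) (fun_D2 n (\<lambda>_. c)) (0\<^sub>m 0 n) (0\<^sub>m 0 n) * riccati_P n p c =
    four_block_mat (fun_D2 n (gain1_symbol c)) (fun_D2 n (gain2_symbol p c)) (0\<^sub>m 0 n) (0\<^sub>m 0 n)"
  unfolding riccati_P_def by (subst mult_four_block_mat[of _ n n _ n _ 0 _ _ n _ n]) (simp_all add: fun_D2_mult)

lemma riccati_P_ARE:
  assumes "n > 0" "p > 0" "c > 0"
  shows "riccati_P n p c * Amat n + transpose_mat (Amat n) * riccati_P n p c
    - riccati_P n p c * four_block_mat (0\<^sub>m n n) (0\<^sub>m n n) (0\<^sub>m n n) (fun_D2 n (\<lambda>_. c)) * riccati_P n p c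
    + Qmat n p = 0\<^sub>m (n + n) (n + n)"
  unfolding transpose_Amat[OF assms(1)]
  unfolding Amat_blocks[OF assms(1)] riccati_P_def Qmat_blocks
proof (rule fun_D2_block_riccati)
  fix x
  show "2 * x * (gain1_symbol c x / c) - c * (gain1_symbol c x / c) * (gain1_symbol c x / c) + 1 = 0"
    using assms gain1_symbol_square[of c x] by (simp add: field_simps)
  show "gain2_symbol p c x * (gain1_symbol c x - x) / c + x * (gain2_symbol p c x / c)
      - c * (gain1_symbol c x / c) * (gain2_symbol p c x / c) = 0"
    using assms by (simp add: field_simps)
  show "2 * (gain1_symbol c x / c) - c * (gain2_symbol p c x / c) * (gain2_symbol p c x / c) + p = 0"
    using assms gain2_symbol_square[of c p x] by (simp add: field_simps)
qed

lemma pos_def_riccati_P: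
  assumes "p > 0" "c > 0"
  shows "pos_def_mat (riccati_P n p c)"
  unfolding riccati_P_def
proof (rule pos_def_fun_D2_block)
  fix x
  have k1: "gain1_symbol c x > x" and k2: "gain2_symbol p c x > 0"
    using assms by (simp_all add: gain1_symbol_gt gain2_symbol_pos)
  then show "gain2_symbol p c x * (gain1_symbol c x - x) / c > 0"
    using assms by simp
  have "gain2_symbol p c x * gain2_symbol p c x * (gain1_symbol c x - x) - gain1_symbol c x * gain1_symbol c x
      = c + p * c * (gain1_symbol c x - x)"
    using assms by (simp add: gain2_symbol_square gain1_symbol_square algebra_simps)
  also have "\<dots> > 0" using assms k1 by (simp add: add_pos_pos)
  finally show "gain1_symbol c x / c * (gain1_symbol c x / c)
      < gain2_symbol p c x * (gain1_symbol c x - x) / c * (gain2_symbol p c x / c)"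
    using assms by (simp add: field_simps)
qed

lemma closed_loop_riccati_P:
  assumes "n > 0" "c \<noteq> 0"
  shows "Amat n - four_block_mat (0\<^sub>m n n) (0\<^sub>m n n) (0\<^sub>m n n) (fun_D2 n (\<lambda>_. c)) * riccati_P n p c =
    four_block_mat (0\<^sub>m n n) (1\<^sub>m n) (fun_D2 n (\<lambda>x. x - gain1_symbol c x)) (fun_D2 n (\<lambda>x. - gain2_symbol p c x))"
proof -
  have "four_block_mat (0\<^sub>m n n) (0\<^sub>m n n) (0\<^sub>m n n) (fun_D2 n (\<lambda>_. c)) * riccati_P n p c =
      four_block_mat (0\<^sub>m n n) (0\<^sub>m n n) (fun_D2 n (gain1_symbol c)) (fun_D2 n (gain2_symbol p c))"
    unfolding riccati_P_def using assms(2)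
    by (subst mult_four_block_mat[of _ n n _ n _ n _ _ n _ n]) (simp_all add: fun_D2_mult)
  moreover have "0\<^sub>m n n - fun_D2 n (gain2_symbol p c) = fun_D2 n (\<lambda>x. - gain2_symbol p c x)"
    using fun_D2_diff[of n "\<lambda>_. 0" "gain2_symbol p c"] by (simp add: fun_D2_zeroI)
  moreover have "1\<^sub>m n - 0\<^sub>m n n = (1\<^sub>m n :: real mat)"
    by (rule eq_matI) simp_all
  ultimately show ?thesis
    unfolding Amat_blocks[OF assms(1)]
    by (simp add: minus_four_block_mat[of _ n n _ n _ n] fun_D2_diff minus_r_inv_mat[of _ n n])
qed

lemma hurwitz_closed_loop_riccati_P:
  assumes "n > 0" "p > 0" "c > 0"
  shows "hurwitz (Amat n - four_block_mat (0\<^sub>m n n) (0\<^sub>m n n) (0\<^sub>m n n) (fun_D2 n (\<lambda>_. c)) * riccati_P n p c)"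
  unfolding hurwitz_def
proof (intro allI impI)
  fix z
  have "map_mat complex_of_real (Amat n - four_block_mat (0\<^sub>m n n) (0\<^sub>m n n) (0\<^sub>m n n) (fun_D2 n (\<lambda>_. c)) * riccati_P n p c) =
      four_block_mat (0\<^sub>m n n) (1\<^sub>m n) (fourier_mult n (D2_symbol n (\<lambda>x. x - gain1_symbol c x)))
        (fourier_mult n (D2_symbol n (\<lambda>x. - gain2_symbol p c x)))"
    using assms
    by (simp add: closed_loop_riccati_P map_four_block_mat[of _ n n _ n _ n] of_real_fun_D2)
      (intro cong_four_block_mat eq_matI; simp)
  moreover assume "eigenvalue (map_mat complex_of_real
      (Amat n - four_block_mat (0\<^sub>m n n) (0\<^sub>m n n) (0\<^sub>m n n) (fun_D2 n (\<lambda>_. c)) * riccati_P n p c)) z"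
  ultimately have "eigenvalue (four_block_mat (0\<^sub>m n n) (1\<^sub>m n)
      (fourier_mult n (D2_symbol n (\<lambda>x. x - gain1_symbol c x)))
      (fourier_mult n (D2_symbol n (\<lambda>x. - gain2_symbol p c x)))) z"
    by simp
  then obtain k where "z * z = D2_symbol n (\<lambda>x. - gain2_symbol p c x) k * z
      + D2_symbol n (\<lambda>x. x - gain1_symbol c x) k"
    using eigenvalue_companion_fourier_mult by blast
  then have "z * z + of_real (gain2_symbol p c (Dhat n k)) * z + of_real (gain1_symbol c (Dhat n k) - Dhat n k) = 0"
    by (simp add: D2_symbol_def algebra_simps)
  then show "Re z < 0"
    using assms by (intro quadratic_root_Re_neg[of "gain2_symbol p c (Dhat n k)" "gain1_symbol c (Dhat n k) - Dhat n k"])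
      (simp_all add: gain2_symbol_pos gain1_symbol_gt)
qed

lemma care_solution_riccati_P:
  assumes "n > 0" "\<Pi>2 > 0" "\<Pi>3 > 0"
  shows "care_solution (Amat n) (Bmat n) (Qmat n \<Pi>2) (Rmat n \<Pi>3) (riccati_P n \<Pi>2 (\<Pi>3\<^sup>2))"
proof -
  have "dim_row (Amat n) = n + n" using Amat_carrier[of n] by simp
  moreover have "riccati_P n \<Pi>2 (\<Pi>3\<^sup>2) * Bmat n * mat_inv (Rmat n \<Pi>3) * transpose_mat (Bmat n) * riccati_P n \<Pi>2 (\<Pi>3\<^sup>2)
      = riccati_P n \<Pi>2 (\<Pi>3\<^sup>2) * four_block_mat (0\<^sub>m n n) (0\<^sub>m n n) (0\<^sub>m n n) (fun_D2 n (\<lambda>_. \<Pi>3\<^sup>2)) * riccati_P n \<Pi>2 (\<Pi>3\<^sup>2)"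
    using assms Bmat_carrier[of n]
    by (simp add: riccati_quadratic_assoc[of _ "n + n" _ n] mat_inv_Rmat Bmat_Rmat_blocks[symmetric])
  ultimately show ?thesis
    using assms unfolding care_solution_def
    by (simp add: transpose_riccati_P pos_def_riccati_P riccati_P_ARE Bmat_Rmat_blocks
        hurwitz_closed_loop_riccati_P)
qed

lemma care_solution_eq_riccati_P:
  assumes "n > 0" "\<Pi>2 > 0" "\<Pi>3 > 0"
    and "care_solution (Amat n) (Bmat n) (Qmat n \<Pi>2) (Rmat n \<Pi>3) P"
  shows "P = riccati_P n \<Pi>2 (\<Pi>3\<^sup>2)"
proof (rule care_solution_unique[OF Amat_carrier Bmat_carrier _ Qmat_carrier _ assms(4)])
  show "mat_inv (Rmat n \<Pi>3) \<in> carrier_mat n n"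
    using assms by (simp add: mat_inv_Rmat)
  show "transpose_mat (Bmat n * mat_inv (Rmat n \<Pi>3) * transpose_mat (Bmat n)) =
      Bmat n * mat_inv (Rmat n \<Pi>3) * transpose_mat (Bmat n)"
    using assms by (simp add: Bmat_Rmat_blocks transpose_four_block_mat[of _ n n _ n _ n] transpose_fun_D2)
  show "care_solution (Amat n) (Bmat n) (Qmat n \<Pi>2) (Rmat n \<Pi>3) (riccati_P n \<Pi>2 (\<Pi>3\<^sup>2))"
    using assms(1-3) by (rule care_solution_riccati_P)
qed

lemma K1mat_eq: "K1mat n \<Pi>3 = fourier_mult n (D2_symbol n (gain1_symbol (\<Pi>3\<^sup>2)))"
  by (simp add: K1mat_def fourier_mult_def mat_inv_DFT D2_symbol_def[abs_def] K0hat_def gain1_symbol_def)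

lemma K2mat_eq: "K2mat n \<Pi>2 \<Pi>3 = fourier_mult n (D2_symbol n (gain2_symbol \<Pi>2 (\<Pi>3\<^sup>2)))"
  by (simp add: K2mat_def fourier_mult_def mat_inv_DFT D2_symbol_def[abs_def] K0hat_def gain1_symbol_def
      gain2_symbol_def)

lemma lqr_gain_riccati_P:
  assumes "\<Pi>3 \<noteq> 0"
  shows "map_mat complex_of_real (lqr_gain (Bmat n) (Rmat n \<Pi>3) (riccati_P n \<Pi>2 (\<Pi>3\<^sup>2))) =
    hcat (K1mat n \<Pi>3) (K2mat n \<Pi>2 \<Pi>3)"
  using assms
  by (simp add: lqr_gain_Bmat_Rmat gain_mult_riccati_P map_four_block_mat[of _ n n _ n _ 0] of_real_fun_D2
      hcat_def K1mat_eq K2mat_eq)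

theorem lemma1:
  fixes n :: nat and \<Pi>2 \<Pi>3 :: real
  assumes "n \<ge> 2" and "\<Pi>2 > 0" and "\<Pi>3 > 0"
  shows "(\<exists>P. care_solution (Amat n) (Bmat n) (Qmat n \<Pi>2) (Rmat n \<Pi>3) P) \<and>
         (\<forall>P. care_solution (Amat n) (Bmat n) (Qmat n \<Pi>2) (Rmat n \<Pi>3) P \<longrightarrow>
              map_mat complex_of_real (lqr_gain (Bmat n) (Rmat n \<Pi>3) P) =
              hcat (K1mat n \<Pi>3) (K2mat n \<Pi>2 \<Pi>3))"
proof (intro conjI allI impI)
  have n: "n > 0" using assms(1) by simp
  show "\<exists>P. care_solution (Amat n) (Bmat n) (Qmat n \<Pi>2) (Rmat n \<Pi>3) P"
    using care_solution_riccati_P[OF n assms(2,3)] ..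
  fix P assume "care_solution (Amat n) (Bmat n) (Qmat n \<Pi>2) (Rmat n \<Pi>3) P"
  then have "P = riccati_P n \<Pi>2 (\<Pi>3\<^sup>2)"
    by (rule care_solution_eq_riccati_P[OF n assms(2,3)])
  then show "map_mat complex_of_real (lqr_gain (Bmat n) (Rmat n \<Pi>3) P) = hcat (K1mat n \<Pi>3) (K2mat n \<Pi>2 \<Pi>3)"
    using lqr_gain_riccati_P[of \<Pi>3 n \<Pi>2] assms(3) by simp
qed

end
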